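(* Let $X$ be a Hausdorff space and $A\in\mathcal{F}(X)$. The following are equivalent: (a) $A$ is a $P$-point of $\mathcal{F}(X)$; (b) $A$ is a $P$-point of $\mathcal{F}_n(X)$ for each positive integer $n\geq|A|$; (c) every $x\in A$ is a $P$-point of $X$.
   Context: $\mathcal{F}(X)$ is the set of nonempty finite subsets of $X$ and $\mathcal{F}_n(X)$ the set of nonempty subsets with at most $n$ points, both with the Vietoris topology (generated by $U^+=\{A: A\subset U\}$ and $U^-=\{A: A\cap U\neq\emptyset\}$ for $U$ open in $X$). A point $p$ of a space $Z$ is a $P$-point if $p$ lies in the interior of every $G_\delta$ subset of $Z$ containing $p$. *)

theory Defs
  imports "HOL-Analysis.Analysis"
begin

definition vietoris_on :: "'a topology \<Rightarrow> 'a set set \<Rightarrow> 'a set topology" where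
  "vietoris_on X C = topology_generated_by
     ({{A \<in> C. A \<subseteq> U} | U. openin X U} \<union> {{A \<in> C. A \<inter> U \<noteq> {}} | U. openin X U})"

definition fin_hyperspace :: "'a topology \<Rightarrow> 'a set topology" where
  "fin_hyperspace X = vietoris_on X {A. A \<noteq> {} \<and> finite A \<and> A \<subseteq> topspace X}"

definition fin_hyperspace_n :: "'a topology \<Rightarrow> nat \<Rightarrow> 'a set topology" where
  "fin_hyperspace_n X n =
     vietoris_on X {A. A \<noteq> {} \<and> finite A \<and> card A \<le> n \<and> A \<subseteq> topspace X}"

definition P_point :: "'a topology \<Rightarrow> 'a \<Rightarrow> bool" where
  "P_point Z p \<longleftrightarrow> p \<in> topspace Z \<and>
     (\<forall>G. gdelta_in Z G \<and> p \<in> G \<longrightarrow> p \<in> Z interior_of G)"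

end

theory Submission
  imports Defs
begin

text \<open>A basic Vietoris neighbourhood of a finite set \<open>A\<close> is cut out by finitely many open
  sets of \<open>X\<close>. If every point of \<open>A\<close> is a P-point, the countably many finite families
  describing a \<open>G\<^sub>\<delta>\<close> set around \<open>A\<close> can be refined, point by point, to one finite family,
  so \<open>A\<close> is a P-point of any Vietoris hyperspace containing it. Conversely, a \<open>G\<^sub>\<delta>\<close> set
  around \<open>a \<in> A\<close> is probed by the sets \<open>(A - {a}) \<union> {y}\<close>, which belong to every \<open>\<F>\<^sub>n(X)\<close>
  with \<open>n \<ge> |A|\<close>; as \<open>X\<close> is \<open>T\<^sub>1\<close>, \<open>A - {a}\<close> is closed, and a hyperspace neighbourhood
  of \<open>A\<close> inside the corresponding \<open>G\<^sub>\<delta>\<close> set yields a neighbourhood of \<open>a\<close> inside the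
  given one.\<close>

lemma P_point_open_nbhd_countable:
  assumes "P_point Z p" "countable \<U>" "\<And>U. U \<in> \<U> \<Longrightarrow> openin Z U"
  obtains V where "openin Z V" "p \<in> V" "\<And>U. U \<in> \<U> \<Longrightarrow> p \<in> U \<Longrightarrow> V \<subseteq> U"
proof -
  let ?H = "\<Inter>(insert (topspace Z) {U \<in> \<U>. p \<in> U})"
  have "gdelta_in Z ?H"
  proof (rule gdelta_in_Inter)
    show "countable (insert (topspace Z) {U \<in> \<U>. p \<in> U})"
      using assms(2) by (simp add: countable_subset[of _ \<U>])
  next
    fix S assume "S \<in> insert (topspace Z) {U \<in> \<U>. p \<in> U}"
    then have "openin Z S"
      using assms(3) by auto
    then show "gdelta_in Z S"
      by (rule open_imp_gdelta_in)
  qed simp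
  moreover have "p \<in> ?H"
    using assms(1) unfolding P_point_def by blast
  ultimately have "p \<in> Z interior_of ?H"
    using assms(1) unfolding P_point_def by blast
  then show ?thesis
    using interior_of_subset[of Z ?H] by (intro that[of "Z interior_of ?H"]) auto
qed

lemma gdelta_in_range_openin:
  assumes "gdelta_in X S"
  shows "\<exists>D. (\<forall>n::nat. openin X (D n)) \<and> \<Inter>(range D) = S"
proof -
  from assms[unfolded gdelta_in_descending]
  obtain D where "(\<forall>n. openin X (D n)) \<and> (\<forall>n. D (Suc n) \<subseteq> D n) \<and> \<Inter>(range D) = S" ..
  then show ?thesis
    by (intro exI[of _ D]) simp
qed

definition vietoris_nbhd :: "'a set set \<Rightarrow> 'a set set \<Rightarrow> 'a set \<Rightarrow> 'a set set" where
  "vietoris_nbhd C \<U> A =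
     {B \<in> C. \<forall>U\<in>\<U>. (A \<subseteq> U \<longrightarrow> B \<subseteq> U) \<and> (A \<inter> U \<noteq> {} \<longrightarrow> B \<inter> U \<noteq> {})}"

lemma self_in_vietoris_nbhd: "A \<in> C \<Longrightarrow> A \<in> vietoris_nbhd C \<U> A"
  by (auto simp: vietoris_nbhd_def)

lemma topspace_vietoris_on:
  assumes "C \<subseteq> Pow (topspace X)"
  shows "topspace (vietoris_on X C) = C"
proof -
  let ?S = "{{A \<in> C. A \<subseteq> U} | U. openin X U} \<union> {{A \<in> C. A \<inter> U \<noteq> {}} | U. openin X U}"
  have "{A \<in> C. A \<subseteq> topspace X} \<in> ?S"
    by (rule UnI1, rule CollectI, rule exI[of _ "topspace X"]) simp
  moreover have "{A \<in> C. A \<subseteq> topspace X} = C"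
    using assms by auto
  ultimately have "C \<subseteq> \<Union>?S"
    by (simp only: Union_upper)
  moreover have "\<Union>?S \<subseteq> C"
    by auto
  ultimately show ?thesis
    unfolding vietoris_on_def topology_generated_by_topspace by (rule antisym[rotated])
qed

lemma openin_vietoris_on_upper:
  assumes "openin X U"
  shows "openin (vietoris_on X C) {A \<in> C. A \<subseteq> U}"
  unfolding vietoris_on_def
  by (rule topology_generated_by_Basis, rule UnI1, rule CollectI, rule exI[of _ U]) (simp add: assms)

lemma openin_vietoris_on_lower:
  assumes "openin X U"
  shows "openin (vietoris_on X C) {A \<in> C. A \<inter> U \<noteq> {}}"
  unfolding vietoris_on_def
  by (rule topology_generated_by_Basis, rule UnI2, rule CollectI, rule exI[of _ U]) (simp add: assms)

lemma openin_vietoris_nbhd: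
  assumes "C \<subseteq> Pow (topspace X)" "finite \<U>" "\<And>U. U \<in> \<U> \<Longrightarrow> openin X U"
  shows "openin (vietoris_on X C) (vietoris_nbhd C \<U> A)"
  using assms(2,3)
proof (induction \<U> rule: finite_induct)
  case empty
  then show ?case
    using openin_topspace[of "vietoris_on X C"] topspace_vietoris_on[OF assms(1)]
    by (simp add: vietoris_nbhd_def)
next
  case (insert U \<U>)
  let ?Z = "vietoris_on X C"
  have "openin ?Z C"
    using openin_topspace[of ?Z] unfolding topspace_vietoris_on[OF assms(1)] .
  moreover have "openin X U"
    using insert.prems by simp
  ultimately have "openin ?Z (if A \<subseteq> U then {B \<in> C. B \<subseteq> U} else C)"
    and "openin ?Z (if A \<inter> U \<noteq> {} then {B \<in> C. B \<inter> U \<noteq> {}} else C)"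
    using openin_vietoris_on_upper[OF \<open>openin X U\<close>, of C]
      openin_vietoris_on_lower[OF \<open>openin X U\<close>, of C]
    by simp_all
  moreover have "openin ?Z (vietoris_nbhd C \<U> A)"
    using insert.IH insert.prems by simp
  moreover have "vietoris_nbhd C (insert U \<U>) A = vietoris_nbhd C \<U> A
          \<inter> (if A \<subseteq> U then {B \<in> C. B \<subseteq> U} else C)
          \<inter> (if A \<inter> U \<noteq> {} then {B \<in> C. B \<inter> U \<noteq> {}} else C)"
    by (auto simp: vietoris_nbhd_def)
  ultimately show ?case
    by (simp only: openin_Int)
qed

lemma vietoris_nbhd_Un:
  "vietoris_nbhd C (\<U> \<union> \<V>) A = vietoris_nbhd C \<U> A \<inter> vietoris_nbhd C \<V> A"
  by (simp add: vietoris_nbhd_def set_eq_iff ball_Un conj_ac)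

lemma vietoris_nbhd_subset_openin:
  assumes "openin (vietoris_on X C) W" "A \<in> W"
  shows "\<exists>\<U>. finite \<U> \<and> (\<forall>U\<in>\<U>. openin X U) \<and> vietoris_nbhd C \<U> A \<subseteq> W"
proof -
  have "generate_topology_on
     ({{A \<in> C. A \<subseteq> U} | U. openin X U} \<union> {{A \<in> C. A \<inter> U \<noteq> {}} | U. openin X U}) W"
    using assms(1) unfolding vietoris_on_def openin_topology_generated_by_iff .
  then show ?thesis
    using assms(2)
  proof (induction arbitrary: A)
    case Empty
    then show ?case by simp
  next
    case (Int V W)
    then have "A \<in> V" "A \<in> W"
      by auto
    obtain \<U>\<^sub>1 where "finite \<U>\<^sub>1" "\<forall>U\<in>\<U>\<^sub>1. openin X U" "vietoris_nbhd C \<U>\<^sub>1 A \<subseteq> V"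
      using Int.IH(1)[OF \<open>A \<in> V\<close>] by blast
    moreover obtain \<U>\<^sub>2 where "finite \<U>\<^sub>2" "\<forall>U\<in>\<U>\<^sub>2. openin X U" "vietoris_nbhd C \<U>\<^sub>2 A \<subseteq> W"
      using Int.IH(2)[OF \<open>A \<in> W\<close>] by blast
    ultimately have "vietoris_nbhd C (\<U>\<^sub>1 \<union> \<U>\<^sub>2) A \<subseteq> V \<inter> W"
      and "finite (\<U>\<^sub>1 \<union> \<U>\<^sub>2)" "\<forall>U\<in>\<U>\<^sub>1 \<union> \<U>\<^sub>2. openin X U"
      unfolding vietoris_nbhd_Un by auto
    then show ?case
      by blast
  next
    case (UN K)
    then obtain V where "V \<in> K" "A \<in> V"
      by blast
    then show ?case
      using UN.IH by (meson Union_upper order_trans)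
  next
    case (Basis S)
    then obtain U where "openin X U" "S = {B \<in> C. B \<subseteq> U} \<or> S = {B \<in> C. B \<inter> U \<noteq> {}}"
      by blast
    with Basis.prems have "vietoris_nbhd C {U} A \<subseteq> S"
      unfolding vietoris_nbhd_def by blast
    with \<open>openin X U\<close> show ?case
      by (intro exI[of _ "{U}"]) simp
  qed
qed

lemma vietoris_nbhd_refine:
  assumes "\<And>a. a \<in> A \<Longrightarrow> a \<in> N a" and "\<And>a U. a \<in> A \<Longrightarrow> U \<in> \<U> \<Longrightarrow> a \<in> U \<Longrightarrow> N a \<subseteq> U"
  shows "vietoris_nbhd C (insert (\<Union>(N ` A)) (N ` A)) A \<subseteq> vietoris_nbhd C \<U> A"
proof
  fix B assume B: "B \<in> vietoris_nbhd C (insert (\<Union>(N ` A)) (N ` A)) A"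
  then have "B \<in> C" "B \<subseteq> \<Union>(N ` A)" "\<And>a. a \<in> A \<Longrightarrow> B \<inter> N a \<noteq> {}"
    using assms(1) by (auto simp: vietoris_nbhd_def)
  then show "B \<in> vietoris_nbhd C \<U> A"
    using assms(2) unfolding vietoris_nbhd_def by blast
qed

lemma insert_Diff_in_vietoris_nbhd:
  assumes "a \<in> A" "insert y (A - {a}) \<in> C" "\<And>U. U \<in> \<U> \<Longrightarrow> a \<in> U \<Longrightarrow> y \<in> U"
  shows "insert y (A - {a}) \<in> vietoris_nbhd C \<U> A"
  using assms unfolding vietoris_nbhd_def by blast

lemma P_point_vietoris_onI:
  assumes C: "C \<subseteq> Pow (topspace X)" and "A \<in> C" "finite A"
    and points: "\<And>x. x \<in> A \<Longrightarrow> P_point X x"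
  shows "P_point (vietoris_on X C) A"
  unfolding P_point_def
proof (intro conjI allI impI)
  let ?Z = "vietoris_on X C"
  show "A \<in> topspace ?Z"
    using topspace_vietoris_on[OF C] \<open>A \<in> C\<close> by simp
  fix G assume "gdelta_in ?Z G \<and> A \<in> G"
  then have "gdelta_in ?Z G" "A \<in> G"
    by simp_all
  from gdelta_in_range_openin[OF \<open>gdelta_in ?Z G\<close>]
  obtain D where "(\<forall>n::nat. openin ?Z (D n)) \<and> \<Inter>(range D) = G" ..
  then have D_open: "\<And>n. openin ?Z (D n)" and D_Inter: "\<Inter>(range D) = G"
    by simp_all
  have "\<forall>n. \<exists>\<U>. finite \<U> \<and> (\<forall>U\<in>\<U>. openin X U) \<and> vietoris_nbhd C \<U> A \<subseteq> D n"
  proof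
    fix n
    have "A \<in> D n"
      using \<open>A \<in> G\<close> D_Inter by blast
    then show "\<exists>\<U>. finite \<U> \<and> (\<forall>U\<in>\<U>. openin X U) \<and> vietoris_nbhd C \<U> A \<subseteq> D n"
      by (rule vietoris_nbhd_subset_openin[OF D_open])
  qed
  from choice[OF this] obtain \<U> where
    \<U>: "\<forall>n. finite (\<U> n) \<and> (\<forall>U\<in>\<U> n. openin X U) \<and> vietoris_nbhd C (\<U> n) A \<subseteq> D n" ..
  \<comment> \<open>The families \<open>\<U> n\<close> together are countable, so each P-point \<open>a \<in> A\<close> has a single
    neighbourhood \<open>N a\<close> inside all their members containing \<open>a\<close>.\<close>
  have "\<forall>a\<in>A. \<exists>V. openin X V \<and> a \<in> V \<and> (\<forall>n. \<forall>U\<in>\<U> n. a \<in> U \<longrightarrow> V \<subseteq> U)"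
  proof
    fix a assume "a \<in> A"
    have "countable (\<Union>(range \<U>))"
      by (rule countable_UN) (simp_all add: \<U> countable_finite)
    moreover have "\<And>U. U \<in> \<Union>(range \<U>) \<Longrightarrow> openin X U"
      using \<U> by blast
    ultimately obtain V where
      "openin X V" "a \<in> V" "\<And>U. U \<in> \<Union>(range \<U>) \<Longrightarrow> a \<in> U \<Longrightarrow> V \<subseteq> U"
      using P_point_open_nbhd_countable[OF points[OF \<open>a \<in> A\<close>]] by blast
    then show "\<exists>V. openin X V \<and> a \<in> V \<and> (\<forall>n. \<forall>U\<in>\<U> n. a \<in> U \<longrightarrow> V \<subseteq> U)"
      by blast
  qed
  from bchoice[OF this] obtain N where
    N: "\<forall>a\<in>A. openin X (N a) \<and> a \<in> N a \<and> (\<forall>n. \<forall>U\<in>\<U> n. a \<in> U \<longrightarrow> N a \<subseteq> U)" ..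
  let ?W = "vietoris_nbhd C (insert (\<Union>(N ` A)) (N ` A)) A"
  have "openin ?Z ?W"
    using N \<open>finite A\<close> by (intro openin_vietoris_nbhd[OF C]) auto
  moreover have "?W \<subseteq> vietoris_nbhd C (\<U> n) A" for n
    using N by (intro vietoris_nbhd_refine) auto
  then have "?W \<subseteq> G"
    using \<U> D_Inter by blast
  ultimately have "?W \<subseteq> ?Z interior_of G"
    by (rule interior_of_maximal[rotated])
  then show "A \<in> ?Z interior_of G"
    using self_in_vietoris_nbhd[OF \<open>A \<in> C\<close>] by blast
qed

text \<open>Points \<open>y\<close> near \<open>a\<close> are tested by the sets \<open>insert y (A - {a})\<close>: away from the
  closed set \<open>A - {a}\<close> they meet each \<open>U\<^sup>-\<close> only at \<open>y\<close>.\<close>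
lemma P_point_vietoris_onD:
  assumes "t1_space X" and C: "C \<subseteq> Pow (topspace X)" and "A \<in> C" "finite A"
    and swap: "\<And>a y. a \<in> A \<Longrightarrow> y \<in> topspace X \<Longrightarrow> insert y (A - {a}) \<in> C"
    and "P_point (vietoris_on X C) A" "a \<in> A"
  shows "P_point X a"
  unfolding P_point_def
proof (intro conjI allI impI)
  let ?Z = "vietoris_on X C"
  have "A \<subseteq> topspace X"
    using C \<open>A \<in> C\<close> by blast
  then show "a \<in> topspace X"
    using \<open>a \<in> A\<close> by blast
  fix H assume "gdelta_in X H \<and> a \<in> H"
  then have "gdelta_in X H" "a \<in> H"
    by simp_all
  from gdelta_in_range_openin[OF \<open>gdelta_in X H\<close>]
  obtain D where "(\<forall>n::nat. openin X (D n)) \<and> \<Inter>(range D) = H" ..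
  then have D_open: "\<And>n. openin X (D n)" and D_Inter: "\<Inter>(range D) = H"
    by simp_all
  define V where "V = topspace X - (A - {a})"
  have "closedin X (A - {a})"
    using \<open>t1_space X\<close> \<open>finite A\<close> \<open>A \<subseteq> topspace X\<close>
    unfolding t1_space_closedin_finite by blast
  then have "openin X V"
    unfolding V_def by (rule openin_diff[OF openin_topspace])
  define G where "G = (\<Inter>n. {B \<in> C. B \<inter> (D n \<inter> V) \<noteq> {}})"
  have "gdelta_in ?Z G"
    unfolding G_def
  proof (rule gdelta_in_Inter)
    fix S assume "S \<in> range (\<lambda>n. {B \<in> C. B \<inter> (D n \<inter> V) \<noteq> {}})"
    then obtain n where "S = {B \<in> C. B \<inter> (D n \<inter> V) \<noteq> {}}"
      by blast
    moreover have "openin X (D n \<inter> V)"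
      using D_open \<open>openin X V\<close> by (rule openin_Int)
    ultimately show "gdelta_in ?Z S"
      by (simp add: openin_vietoris_on_lower open_imp_gdelta_in)
  qed simp_all
  moreover have "A \<in> G"
    unfolding G_def V_def using \<open>A \<in> C\<close> \<open>a \<in> A\<close> \<open>a \<in> H\<close> D_Inter \<open>a \<in> topspace X\<close> by blast
  ultimately have "A \<in> ?Z interior_of G"
    using \<open>P_point ?Z A\<close> unfolding P_point_def by blast
  from vietoris_nbhd_subset_openin[OF openin_interior_of this]
  obtain \<U> where "finite \<U> \<and> (\<forall>U\<in>\<U>. openin X U) \<and> vietoris_nbhd C \<U> A \<subseteq> ?Z interior_of G" ..
  then have \<U>: "finite \<U>" "\<And>U. U \<in> \<U> \<Longrightarrow> openin X U" and "vietoris_nbhd C \<U> A \<subseteq> G"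
    using interior_of_subset[of ?Z G] by auto
  define N where "N = V \<inter> \<Inter>{U \<in> \<U>. a \<in> U}"
  have "openin X N"
    unfolding N_def using \<open>openin X V\<close> \<U>(1,2) by (intro openin_Int_Inter) auto
  moreover have "a \<in> N"
    unfolding N_def V_def using \<open>a \<in> topspace X\<close> by blast
  moreover have "N \<subseteq> H"
  proof
    fix y assume "y \<in> N"
    then have "y \<in> topspace X"
      using \<open>openin X N\<close> openin_subset by blast
    then have "insert y (A - {a}) \<in> G"
      using insert_Diff_in_vietoris_nbhd[OF \<open>a \<in> A\<close> swap] \<open>vietoris_nbhd C \<U> A \<subseteq> G\<close>
        \<open>a \<in> A\<close> \<open>y \<in> N\<close>
      unfolding N_def by blast
    moreover have "insert y (A - {a}) \<inter> V \<subseteq> {y}"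
      unfolding V_def by blast
    ultimately show "y \<in> H"
      unfolding G_def D_Inter[symmetric] by blast
  qed
  ultimately have "N \<subseteq> X interior_of H"
    by (intro interior_of_maximal) simp_all
  then show "a \<in> X interior_of H"
    using \<open>a \<in> N\<close> by blast
qed

lemma P_point_vietoris_on_iff:
  assumes "t1_space X" "C \<subseteq> Pow (topspace X)" "A \<in> C" "finite A"
    and "\<And>a y. a \<in> A \<Longrightarrow> y \<in> topspace X \<Longrightarrow> insert y (A - {a}) \<in> C"
  shows "P_point (vietoris_on X C) A \<longleftrightarrow> (\<forall>x\<in>A. P_point X x)"
  using P_point_vietoris_onD[OF assms] P_point_vietoris_onI[OF assms(2-4)] by blast

lemma card_insert_Diff_le:
  assumes "finite A" "a \<in> A"
  shows "card (insert y (A - {a})) \<le> card A"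
proof -
  have "card (insert y (A - {a})) \<le> Suc (card (A - {a}))"
    using assms(1) by (simp add: card_insert_if)
  also have "\<dots> = card A"
    by (rule card_Suc_Diff1[OF assms])
  finally show ?thesis .
qed

theorem proposition2p2:
  fixes X :: "'a topology" and A :: "'a set"
  assumes "Hausdorff_space X"
    and "A \<in> topspace (fin_hyperspace X)"
  shows "(P_point (fin_hyperspace X) A
            \<longleftrightarrow> (\<forall>n::nat. 0 < n \<and> card A \<le> n \<longrightarrow> P_point (fin_hyperspace_n X n) A))
       \<and> (P_point (fin_hyperspace X) A \<longleftrightarrow> (\<forall>x\<in>A. P_point X x))"
proof -
  let ?C = "{B. B \<noteq> {} \<and> finite B \<and> B \<subseteq> topspace X}"
  let ?C\<^sub>n = "\<lambda>n. {B. B \<noteq> {} \<and> finite B \<and> card B \<le> n \<and> B \<subseteq> topspace X}"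
  have "t1_space X"
    using assms(1) by (rule Hausdorff_imp_t1_space)
  have "topspace (fin_hyperspace X) = ?C"
    unfolding fin_hyperspace_def by (rule topspace_vietoris_on) blast
  then have A: "A \<noteq> {}" "finite A" "A \<subseteq> topspace X"
    using assms(2) by auto
  have swap: "insert y (A - {a}) \<in> ?C\<^sub>n n" if "card A \<le> n" "a \<in> A" "y \<in> topspace X" for n a y
    using card_insert_Diff_le[OF \<open>finite A\<close> \<open>a \<in> A\<close>, of y] that A by auto
  have "P_point (fin_hyperspace X) A \<longleftrightarrow> (\<forall>x\<in>A. P_point X x)"
    unfolding fin_hyperspace_def using swap[OF order_refl] A
    by (intro P_point_vietoris_on_iff[OF \<open>t1_space X\<close>]) auto
  moreover have "P_point (fin_hyperspace_n X n) A \<longleftrightarrow> (\<forall>x\<in>A. P_point X x)" if "card A \<le> n" for n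
    unfolding fin_hyperspace_n_def using swap[OF that] A that
    by (intro P_point_vietoris_on_iff[OF \<open>t1_space X\<close>]) auto
  moreover have "0 < card A"
    using A by (simp add: card_gt_0_iff)
  ultimately show ?thesis
    by blast
qed

end
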